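(* Let $m\ge 2$ be an integer and let $F\subseteq\mathbb Z$ be a finite nonempty set whose elements all lie in a single congruence class modulo $m$, and this class is not $0\bmod m$. Then $C=m\mathbb N\cup F$ arises as a minimal additive complement in $\mathbb Z$.
   Context: $\mathbb N=\{0,1,2,\dots\}$ and $m\mathbb N=\{mk:k\in\mathbb N\}$. For $C,W\subseteq\mathbb Z$, $C+W=\{c+w:c\in C,w\in W\}$. $C$ is a minimal additive complement (MAC) to $W$ if $C+W=\mathbb Z$ and no proper subset $C'\subsetneq C$ satisfies $C'+W=\mathbb Z$. $C$ arises as a MAC if there exists $W\subseteq\mathbb Z$ to which $C$ is a MAC. *)

theory Defs
  imports Main
begin

definition sumset :: "int set \<Rightarrow> int set \<Rightarrow> int set" where
  "sumset C W = {c + w | c w. c \<in> C \<and> w \<in> W}"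

definition is_MAC :: "int set \<Rightarrow> int set \<Rightarrow> bool" where
  "is_MAC C W \<longleftrightarrow> sumset C W = UNIV \<and> (\<forall>C'. C' \<subset> C \<longrightarrow> sumset C' W \<noteq> UNIV)"

definition arises_as_MAC :: "int set \<Rightarrow> bool" where
  "arises_as_MAC C \<longleftrightarrow> (\<exists>W. is_MAC C W)"

end

theory Submission
  imports Defs
begin

text \<open>
  Take \<open>W = {0} \<union> {w. w \<not>\<equiv> 0, -r (mod m)} \<union> low\<close>, where \<open>low\<close> consists of very negative
  elements of the class of \<open>-r\<close>. Then \<open>0 + W\<close> covers the classes other than \<open>0\<close> and \<open>-r\<close>,
  \<open>m\<nat> + 0\<close> the non-negative multiples of \<open>m\<close>, \<open>m\<nat> + low\<close> the class of \<open>-r\<close>, and \<open>F + low\<close>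
  the negative multiples of \<open>m\<close>. Each \<open>m k\<close> needs the summand \<open>m k\<close> itself, as \<open>F + low\<close> is
  negative. To make each \<open>g \<in> F\<close> indispensable, attach to it a negative multiple \<open>witness g\<close>
  of \<open>m\<close>, the witnesses far apart, and remove from \<open>low\<close> all \<open>witness g - h\<close> with \<open>h \<in> F - {g}\<close>.
  A negative multiple \<open>z\<close> of \<open>m\<close> stays covered: were all of \<open>z - F\<close> removed, the separation
  of the witnesses would force \<open>z - F \<subseteq> witness g\<^sub>0 - (F - {g\<^sub>0})\<close> for a single \<open>g\<^sub>0\<close>, so a
  translation would map \<open>F\<close> into a proper subset of itself.
\<close>

lemma mem_sumset_iff: "z \<in> sumset C W \<longleftrightarrow> (\<exists>c\<in>C. z - c \<in> W)"
  unfolding sumset_def by force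

lemma is_MAC_if_unique_representations:
  assumes "sumset C W = UNIV"
    and "\<And>c. c \<in> C \<Longrightarrow> \<exists>z. \<forall>c'\<in>C. z - c' \<in> W \<longrightarrow> c' = c"
  shows "is_MAC C W"
  unfolding is_MAC_def
proof (intro conjI allI impI)
  show "sumset C W = UNIV" by fact
  fix C' assume "C' \<subset> C"
  then obtain c where "c \<in> C" "c \<notin> C'" by blast
  with assms(2) obtain z where "\<forall>c'\<in>C. z - c' \<in> W \<longrightarrow> c' = c" by blast
  with \<open>C' \<subset> C\<close> \<open>c \<notin> C'\<close> have "z \<notin> sumset C' W" by (auto simp: mem_sumset_iff)
  then show "sumset C' W \<noteq> UNIV" by blast
qed

lemma translate_not_subset_remove:
  fixes F :: "int set"
  assumes "finite F" and "g \<in> F"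
  shows "\<not> (\<lambda>f. f + t) ` F \<subseteq> F - {g}"
proof
  assume "(\<lambda>f. f + t) ` F \<subseteq> F - {g}"
  then have "card ((\<lambda>f. f + t) ` F) \<le> card (F - {g})"
    using assms(1) by (intro card_mono) auto
  moreover have "card ((\<lambda>f. f + t) ` F) = card F"
    by (rule card_image) (simp add: inj_on_def)
  moreover have "card (F - {g}) < card F"
    using assms by (rule card_Diff1_less)
  ultimately show False by simp
qed

lemma ex_translate_outside_separated_differences:
  fixes F :: "int set" and \<zeta> :: "int \<Rightarrow> int"
  assumes "finite F" and "F \<noteq> {}"
    and bounded: "\<And>f. f \<in> F \<Longrightarrow> \<bar>f\<bar> \<le> A"
    and separated: "\<And>g g'. g \<in> F \<Longrightarrow> g' \<in> F \<Longrightarrow> g \<noteq> g' \<Longrightarrow> 4 * A < \<bar>\<zeta> g - \<zeta> g'\<bar>"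
  shows "\<exists>f\<in>F. z - f \<notin> {\<zeta> g - h | g h. g \<in> F \<and> h \<in> F \<and> h \<noteq> g}"
proof (rule ccontr)
  assume "\<not> ?thesis"
  then have difference: "\<exists>g h. g \<in> F \<and> h \<in> F \<and> h \<noteq> g \<and> z - f = \<zeta> g - h" if "f \<in> F" for f
    using that by blast
  obtain f\<^sub>0 where "f\<^sub>0 \<in> F" using \<open>F \<noteq> {}\<close> by blast
  with difference obtain g\<^sub>0 h\<^sub>0 where g\<^sub>0: "g\<^sub>0 \<in> F" "h\<^sub>0 \<in> F" "z - f\<^sub>0 = \<zeta> g\<^sub>0 - h\<^sub>0" by blast
  have "f + (\<zeta> g\<^sub>0 - z) \<in> F - {g\<^sub>0}" if "f \<in> F" for f
  proof -
    obtain g h where gh: "g \<in> F" "h \<in> F" "h \<noteq> g" "z - f = \<zeta> g - h"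
      using difference[OF \<open>f \<in> F\<close>] by blast
    have "\<bar>h\<bar> \<le> A" "\<bar>f\<bar> \<le> A" "\<bar>h\<^sub>0\<bar> \<le> A" "\<bar>f\<^sub>0\<bar> \<le> A"
      using bounded gh g\<^sub>0 \<open>f \<in> F\<close> \<open>f\<^sub>0 \<in> F\<close> by auto
    moreover have "\<zeta> g - \<zeta> g\<^sub>0 = (h - f) - (h\<^sub>0 - f\<^sub>0)" using gh g\<^sub>0 by simp
    ultimately have "\<bar>\<zeta> g - \<zeta> g\<^sub>0\<bar> \<le> 4 * A" by (simp only: abs_le_iff) linarith
    then have "g = g\<^sub>0" using separated[of g g\<^sub>0] gh(1) g\<^sub>0(1) by force
    with gh have "f + (\<zeta> g\<^sub>0 - z) = h" by simp
    with gh \<open>g = g\<^sub>0\<close> show ?thesis by simp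
  qed
  then have "(\<lambda>f. f + (\<zeta> g\<^sub>0 - z)) ` F \<subseteq> F - {g\<^sub>0}" by (rule image_subsetI)
  with translate_not_subset_remove[OF \<open>finite F\<close> \<open>g\<^sub>0 \<in> F\<close>] show False by contradiction
qed

locale multiples_union_class =
  fixes m r :: int and F :: "int set"
  assumes m_pos: "m > 0"
    and finite_F: "finite F" and F_nonempty: "F \<noteq> {}"
    and F_in_class: "\<And>f. f \<in> F \<Longrightarrow> m dvd f - r"
    and r_not_multiple: "\<not> m dvd r"
begin

definition C :: "int set" where
  "C = {m * int k | k. True} \<union> F"

definition radius :: int where
  "radius = Max (abs ` F)"

definition witness :: "int \<Rightarrow> int" where
  "witness g = (4 * radius + 1) * m * (g - radius - 1)"

definition blocked :: "int set" where
  "blocked = {witness g - h | g h. g \<in> F \<and> h \<in> F \<and> h \<noteq> g}"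

definition low :: "int set" where
  "low = {v. m dvd v + r \<and> v < - Max F \<and> v \<notin> blocked}"

definition W :: "int set" where
  "W = {0} \<union> {w. \<not> m dvd w \<and> \<not> m dvd w + r} \<union> low"

lemma abs_le_radius: "f \<in> F \<Longrightarrow> \<bar>f\<bar> \<le> radius"
  unfolding radius_def using finite_F by simp

lemma Max_F_le_radius: "Max F \<le> radius"
  using abs_le_radius[OF Max_in[OF finite_F F_nonempty]] by linarith

lemma radius_nonneg: "0 \<le> radius"
  using abs_le_radius F_nonempty by force

lemma witness_le:
  assumes "g \<in> F"
  shows "witness g \<le> - (4 * radius + 1)"
proof -
  have scale: "4 * radius + 1 \<le> (4 * radius + 1) * m"
    using m_pos radius_nonneg by simp
  have "g - radius - 1 \<le> -1" using abs_le_radius[OF assms] by simp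
  then have "(4 * radius + 1) * m * (g - radius - 1) \<le> (4 * radius + 1) * m * (-1)"
    using scale radius_nonneg by (intro mult_left_mono) auto
  with scale show ?thesis unfolding witness_def by simp
qed

lemma witness_separated:
  assumes "g \<noteq> g'"
  shows "4 * radius < \<bar>witness g - witness g'\<bar>"
proof -
  have "1 * 1 \<le> \<bar>m\<bar> * \<bar>g - g'\<bar>"
    using assms m_pos by (intro mult_mono) auto
  then have "(4 * radius + 1) * 1 \<le> (4 * radius + 1) * (\<bar>m\<bar> * \<bar>g - g'\<bar>)"
    using radius_nonneg by (intro mult_left_mono) auto
  also have "\<dots> = \<bar>(4 * radius + 1) * (m * (g - g'))\<bar>"
    using radius_nonneg by (simp add: abs_mult)
  also have "(4 * radius + 1) * (m * (g - g')) = witness g - witness g'"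
    unfolding witness_def by (simp add: algebra_simps)
  finally show ?thesis by simp
qed

lemma witness_dvd: "m dvd witness g"
  unfolding witness_def by simp

lemma blocked_le:
  assumes "x \<in> blocked"
  shows "x \<le> - 3 * radius - 1"
proof -
  from assms obtain g h where "g \<in> F" "h \<in> F" "x = witness g - h"
    unfolding blocked_def by blast
  with witness_le[of g] abs_le_radius[of h] show ?thesis by linarith
qed

lemma finite_blocked: "finite blocked"
proof -
  have "blocked \<subseteq> (\<lambda>(g, h). witness g - h) ` (F \<times> F)"
    unfolding blocked_def by auto
  then show ?thesis using finite_F finite_subset by blast
qed

lemma C_cases:
  assumes "c \<in> C"
  obtains k where "c = m * int k" | "c \<in> F"
  using assms unfolding C_def by blast

lemma multiple_in_C: "m * int k \<in> C"
  unfolding C_def by blast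

lemma F_subset_C: "F \<subseteq> C"
  unfolding C_def by blast

lemma W_dvd_eq_0: "w \<in> W \<Longrightarrow> m dvd w \<Longrightarrow> w = 0"
  unfolding W_def low_def using r_not_multiple by (auto simp: dvd_add_right_iff)

lemma W_dvd_add_r_in_low: "w \<in> W \<Longrightarrow> m dvd w + r \<Longrightarrow> w \<in> low"
  unfolding W_def using r_not_multiple by auto

lemma dvd_diff_add_r_iff:
  assumes "f \<in> F"
  shows "m dvd z - f + r \<longleftrightarrow> m dvd z"
proof -
  have "m dvd r - f" using F_in_class[OF assms] dvd_minus_iff[of m "f - r"] by simp
  then have "m dvd z + (r - f) \<longleftrightarrow> m dvd z" by (rule dvd_add_left_iff)
  then show ?thesis by (simp add: algebra_simps)
qed

lemma negative_multiple_covered: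
  assumes "m dvd z" and "z < 0"
  shows "\<exists>f\<in>F. z - f \<in> low"
proof (cases "z - Max F \<in> blocked")
  case False
  have "Max F \<in> F" using finite_F F_nonempty by simp
  with False assms have "z - Max F \<in> low" unfolding low_def by (simp add: dvd_diff_add_r_iff)
  with \<open>Max F \<in> F\<close> show ?thesis by blast
next
  case True
  then have "z - Max F \<le> - 3 * radius - 1" by (rule blocked_le)
  then have below: "z - f < - Max F" if "f \<in> F" for f
    using abs_le_radius[OF that] Max_F_le_radius by linarith
  have "\<exists>f\<in>F. z - f \<notin> blocked"
    unfolding blocked_def
    using ex_translate_outside_separated_differences[OF finite_F F_nonempty]
      abs_le_radius witness_separated by blast
  then obtain f where "f \<in> F" "z - f \<notin> blocked" by blast
  moreover have "m dvd z - f + r" using dvd_diff_add_r_iff[OF \<open>f \<in> F\<close>] assms(1) by simp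
  ultimately have "z - f \<in> low" using below unfolding low_def by simp
  with \<open>f \<in> F\<close> show ?thesis by blast
qed

lemma class_minus_r_covered:
  assumes "m dvd z + r"
  shows "\<exists>k. z - m * int k \<in> low"
proof -
  define B where "B = Min (insert 0 blocked)"
  define k where "k = nat (\<bar>z\<bar> + \<bar>B\<bar> + \<bar>Max F\<bar> + 1)"
  have "int k = \<bar>z\<bar> + \<bar>B\<bar> + \<bar>Max F\<bar> + 1" unfolding k_def by simp
  moreover have "1 * int k \<le> m * int k" using m_pos by (intro mult_right_mono) auto
  ultimately have "z - m * int k < B" and "z - m * int k < - Max F" by linarith+
  then have "z - m * int k \<notin> blocked"
    using Min_le[of "insert 0 blocked"] finite_blocked unfolding B_def by fastforce
  moreover have "m dvd z - m * int k + r"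
    using dvd_diff[OF assms, of "m * int k"] by (simp add: algebra_simps)
  ultimately have "z - m * int k \<in> low"
    unfolding low_def using \<open>z - m * int k < - Max F\<close> by simp
  then show ?thesis by blast
qed

lemma sumset_C_W: "sumset C W = UNIV"
proof -
  have "\<exists>c\<in>C. z - c \<in> W" for z
  proof (cases "m dvd z")
    case True
    show ?thesis
    proof (cases "z \<ge> 0")
      case True
      from \<open>m dvd z\<close> obtain q where "z = m * q" by blast
      with True m_pos have "z = m * int (nat q)" by (simp add: zero_le_mult_iff)
      then show ?thesis using multiple_in_C[of "nat q"] unfolding W_def by force
    next
      case False
      then show ?thesis
        using negative_multiple_covered[OF \<open>m dvd z\<close>] F_subset_C unfolding W_def by force
    qed
  next
    case False
    show ?thesis
    proof (cases "m dvd z + r")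
      case True
      then show ?thesis
        using class_minus_r_covered multiple_in_C unfolding W_def by force
    next
      case False
      then have "z - m * int 0 \<in> W" using \<open>\<not> m dvd z\<close> unfolding W_def by simp
      then show ?thesis using multiple_in_C by blast
    qed
  qed
  then show ?thesis by (auto simp: mem_sumset_iff)
qed

lemma multiple_represented_uniquely:
  assumes "c \<in> C" and "m * int k - c \<in> W"
  shows "c = m * int k"
  using assms(1)
proof (cases rule: C_cases)
  case (1 k')
  then have "m dvd m * int k - c" by simp
  with W_dvd_eq_0 assms(2) have "m * int k - c = 0" by blast
  then show ?thesis by simp
next
  case 2
  then have "m * int k - c \<in> low"
    using W_dvd_add_r_in_low[OF assms(2)] by (simp add: dvd_diff_add_r_iff)
  then have "m * int k < c - Max F" unfolding low_def by simp
  moreover have "c \<le> Max F" using 2 finite_F by simp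
  moreover have "0 \<le> m * int k" using m_pos by simp
  ultimately show ?thesis by linarith
qed

lemma witness_represented_uniquely:
  assumes "g \<in> F" and "c \<in> C" and "witness g - c \<in> W"
  shows "c = g"
  using assms(2)
proof (cases rule: C_cases)
  case (1 k)
  then have "witness g = m * int k"
    using W_dvd_eq_0[OF assms(3)] witness_dvd by simp
  moreover have "witness g < 0" using witness_le[OF assms(1)] radius_nonneg by simp
  ultimately show ?thesis using m_pos by (simp add: mult_less_0_iff)
next
  case 2
  then have "witness g - c \<in> low"
    using W_dvd_add_r_in_low[OF assms(3)] witness_dvd by (simp add: dvd_diff_add_r_iff)
  then have "witness g - c \<notin> blocked" unfolding low_def by simp
  with assms(1) 2 show ?thesis unfolding blocked_def by blast
qed

lemma is_MAC_C_W: "is_MAC C W"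
proof (rule is_MAC_if_unique_representations[OF sumset_C_W])
  fix c assume "c \<in> C"
  then show "\<exists>z. \<forall>c'\<in>C. z - c' \<in> W \<longrightarrow> c' = c"
  proof (cases rule: C_cases)
    case 1
    then show ?thesis using multiple_represented_uniquely by blast
  next
    case 2
    then show ?thesis using witness_represented_uniquely by blast
  qed
qed

end

theorem proposition2:
  fixes m :: int and F :: "int set" and r :: int
  assumes "m \<ge> 2"
    and "finite F" and "F \<noteq> {}"
    and "\<forall>f\<in>F. f mod m = r mod m"
    and "r mod m \<noteq> 0"
  shows "arises_as_MAC ({m * int k | k. True} \<union> F)"
proof -
  interpret multiples_union_class m r F
    using assms by unfold_locales (auto simp: mod_eq_dvd_iff dvd_eq_mod_eq_0)
  show ?thesis
    using is_MAC_C_W unfolding arises_as_MAC_def C_def by blast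
qed

end
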